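(* One has $$[4;\overline{4}]+[0;3,\overline{1,3,1,2}]=\frac92=[3;1,3,\overline{4}]+[0;\overline{1,2,1,3}].$$ In particular, $$\frac92=m(\overline{4}\,3\,\overline{1312})=\lim_{n\to\infty}m\big(\overline{4^n\,3\,(1312)^n\,1313}\big)\in L\cap\mathbb{Q}.$$
   Context: Overlines in continued fractions denote infinite periodic repetition of the indicated block. $\overline{4}\,3\,\overline{1312}$ denotes the bi-infinite sequence $\dots4443131213121312\dots$ (all $4$'s to the left of a single $3$, followed by periodic repetition of $1312$), and $\overline{4^n3(1312)^n1313}$ denotes the bi-infinite periodic sequence obtained by repeating the finite block consisting of $n$ copies of $4$, then $3$, then $n$ copies of $1312$, then $1313$. For $\underline a\in(\mathbb{N}^* )^{\mathbb{Z}}$, $\lambda_0(\underline a)=[a_0;a_1,\dots]+[0;a_{-1},a_{-2},\dots]$, $m(\underline a)=\sup_n\lambda_0(\sigma^n\underline a)$ with $\sigma$ the left shift, and $L=\{\limsup_{n\to\infty}\lambda_0(\sigma^n\underline a):\underline a\in(\mathbb{N}^* )^{\mathbb{Z}}\}$ is the Lagrange spectrum. *)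

theory Defs
  imports "HOL-Analysis.Analysis" "HOL-Library.Liminf_Limsup"
begin

fun cf_fin :: "(nat \<Rightarrow> nat) \<Rightarrow> nat \<Rightarrow> real" where
  "cf_fin a 0 = real (a 0)"
| "cf_fin a (Suc n) = real (a 0) + 1 / cf_fin (\<lambda>k. a (Suc k)) n"

definition cf :: "(nat \<Rightarrow> nat) \<Rightarrow> real" where
  "cf a = lim (cf_fin a)"

definition pos_seq :: "(int \<Rightarrow> nat) \<Rightarrow> bool" where
  "pos_seq a \<longleftrightarrow> (\<forall>i. a i \<ge> 1)"

definition lambda0 :: "(int \<Rightarrow> nat) \<Rightarrow> real" where
  "lambda0 a = cf (\<lambda>k. a (int k)) + cf (\<lambda>k. if k = 0 then 0 else a (- int k))"

definition shift :: "int \<Rightarrow> (int \<Rightarrow> nat) \<Rightarrow> (int \<Rightarrow> nat)" where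
  "shift n a = (\<lambda>i. a (i + n))"

definition markov_m :: "(int \<Rightarrow> nat) \<Rightarrow> real" where
  "markov_m a = (SUP n::int. lambda0 (shift n a))"

definition lagrange_spectrum :: "real set" where
  "lagrange_spectrum = {x. \<exists>a. pos_seq a \<and>
     limsup (\<lambda>n::nat. ereal (lambda0 (shift (int n) a))) = ereal x}"

text \<open>The bi-infinite sequence ...444 3 1312 1312 ... (the 3 at index 0).\<close>
definition seqA :: "int \<Rightarrow> nat" where
  "seqA i = (if i < 0 then 4 else if i = 0 then 3 else [1,3,1,2] ! nat ((i - 1) mod 4))"

definition block :: "nat \<Rightarrow> nat list" where
  "block n = replicate n 4 @ [3] @ concat (replicate n [1,3,1,2]) @ [1,3,1,3]"

definition periodic_seq :: "nat list \<Rightarrow> int \<Rightarrow> nat" where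
  "periodic_seq w i = w ! nat (i mod int (length w))"

end

theory Submission
  imports Defs
begin

(*
  Write lambda0 at a position as a_p + [0; right tail] + [0; left tail].  For
  ...4 4 3 1312 1312 ... the quadratic irrationals [4; 4, 4, ...] = 2 + sqrt 5 and
  [1; 3, 1, 2, ...] = (5 + 4 sqrt 5) / 11 give exactly 9/2 at the last 4 and at the 3 after
  "3 1", while crude bounds on the partial quotients keep every other position at most 9/2.

  Sequences agreeing on [-K, K] have values of lambda0 within 4 / 2^K: two steps of
  x -> 1 / (c + x) contract by a factor 4.  Around any position of a sequence made of blocks
  4^n 3 (1312)^n 1313, a window of radius n/2 looks like a translate of the sequence above or
  of its mirror image: the tail (1312)^n 1313 of a block followed by the 4^n of the next one
  is 4^n 3 (1312)^n 1 read backwards.  Hence the Markov values of the periodic sequences tend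
  to 9/2, and concatenating blocks of growing length gives one sequence whose limsup is 9/2.
*)

section \<open>Continued fractions with positive partial quotients\<close>

definition pos_quotients :: "(nat \<Rightarrow> nat) \<Rightarrow> bool" where
  "pos_quotients s \<longleftrightarrow> (\<forall>k. 1 \<le> s k)"

lemma pos_quotients_tail: "pos_quotients s \<Longrightarrow> pos_quotients (\<lambda>k. s (Suc k))"
  unfolding pos_quotients_def by simp

lemma cf_fin_bounds:
  assumes "pos_quotients s"
  shows "s 0 \<le> cf_fin s n \<and> cf_fin s n \<le> s 0 + 1"
  using assms
proof (induction n arbitrary: s)
  case 0
  then show ?case by simp
next
  case (Suc n)
  have "1 \<le> cf_fin (\<lambda>k. s (Suc k)) n"
    using Suc.IH[OF pos_quotients_tail[OF Suc.prems]] Suc.prems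
    unfolding pos_quotients_def by (metis of_nat_1 of_nat_le_iff order.trans)
  then show ?case by simp
qed

lemma inverse_add_inverse_add_dist:
  fixes c d u v :: real
  assumes "1 \<le> c" "1 \<le> d" "0 \<le> u" "0 \<le> v"
  shows "\<bar>1 / (c + 1 / (d + u)) - 1 / (c + 1 / (d + v))\<bar> \<le> \<bar>u - v\<bar> / 4"
proof -
  define X where "X w = c * (d + w) + 1" for w
  have X_ge: "2 \<le> X w" if "0 \<le> w" for w
    using assms that unfolding X_def by (smt (verit) mult_le_cancel_left1)
  have prod_ge: "4 \<le> X u * X v"
    using mult_mono[OF X_ge X_ge] assms X_ge[OF assms(3)] by simp
  have "1 / (c + 1 / (d + u)) - 1 / (c + 1 / (d + v)) = (u - v) / (X u * X v)"
    using assms X_ge[OF assms(3)] X_ge[OF assms(4)] unfolding X_def by (simp add: field_simps)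
  then have "\<bar>1 / (c + 1 / (d + u)) - 1 / (c + 1 / (d + v))\<bar> = \<bar>u - v\<bar> / (X u * X v)"
    using prod_ge by (simp add: abs_divide)
  also have "\<dots> \<le> \<bar>u - v\<bar> / 4"
    using prod_ge by (intro divide_left_mono) auto
  finally show ?thesis .
qed

lemma cf_fin_ge_1:
  assumes "pos_quotients s"
  shows "1 \<le> cf_fin s n"
  using cf_fin_bounds[OF assms, of n] assms unfolding pos_quotients_def
  by (metis of_nat_1 of_nat_le_iff order.trans)

lemma inverse_cf_fin_bounds:
  assumes "pos_quotients s"
  shows "0 < 1 / cf_fin s n \<and> 1 / cf_fin s n \<le> 1"
  using cf_fin_ge_1[OF assms, of n] by simp

lemma inverse_cf_fin_dist_le_1:
  assumes "pos_quotients s" "pos_quotients t"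
  shows "\<bar>1 / cf_fin s m - 1 / cf_fin t n\<bar> \<le> 1"
proof -
  have "0 < 1 / cf_fin s m" "1 / cf_fin s m \<le> 1" "0 < 1 / cf_fin t n" "1 / cf_fin t n \<le> 1"
    using inverse_cf_fin_bounds[OF assms(1)] inverse_cf_fin_bounds[OF assms(2)] by blast+
  then show ?thesis by linarith
qed

lemma inverse_cf_fin_dist:
  assumes "pos_quotients s" "pos_quotients t" "\<forall>k<K. s k = t k" "K \<le> m" "K \<le> n"
  shows "\<bar>1 / cf_fin s m - 1 / cf_fin t n\<bar> \<le> 2 / 2 ^ K"
  using assms
proof (induction K arbitrary: s t m n rule: nat_induct2)
  case 0
  then show ?case
    using inverse_cf_fin_dist_le_1[of s t m n] by simp
next
  case 1
  then show ?case
    using inverse_cf_fin_dist_le_1[of s t m n] by simp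
next
  case (step K)
  define m' where "m' = m - 2"
  define n' where "n' = n - 2"
  let ?s = "\<lambda>k. s (Suc (Suc k))" and ?t = "\<lambda>k. t (Suc (Suc k))"
  have pos: "pos_quotients ?s" "pos_quotients ?t"
    using step.prems(1,2) unfolding pos_quotients_def by auto
  have heads: "s 0 = t 0" "s 1 = t 1" and "\<forall>k<K. ?s k = ?t k"
    using step.prems(3) by auto
  then have IH: "\<bar>1 / cf_fin ?s m' - 1 / cf_fin ?t n'\<bar> \<le> 2 / 2 ^ K"
    using step.IH[OF pos] step.prems(4,5) unfolding m'_def n'_def by auto
  have "m = Suc (Suc m')" "n = Suc (Suc n')"
    using step.prems(4,5) unfolding m'_def n'_def by auto
  then have unfold: "cf_fin s m = s 0 + 1 / (s 1 + 1 / cf_fin ?s m')"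
    "cf_fin t n = s 0 + 1 / (s 1 + 1 / cf_fin ?t n')"
    using heads by simp_all
  have "1 \<le> s 0" "1 \<le> s 1"
    using step.prems(1) unfolding pos_quotients_def by auto
  then have "\<bar>1 / cf_fin s m - 1 / cf_fin t n\<bar> \<le> \<bar>1 / cf_fin ?s m' - 1 / cf_fin ?t n'\<bar> / 4"
    unfolding unfold using inverse_cf_fin_bounds[OF pos(1)] inverse_cf_fin_bounds[OF pos(2)]
    by (intro inverse_add_inverse_add_dist) (auto intro: less_imp_le)
  also have "\<dots> \<le> 2 / 2 ^ (K + 2)"
    using IH by simp
  finally show ?case .
qed

lemma div_pow2_tendsto_0: "(\<lambda>K. c / 2 ^ K) \<longlonglongrightarrow> (0::real)"
  by (simp add: divide_inverse tendsto_mult_right_zero LIMSEQ_inverse_realpow_zero)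

lemma ex_div_pow2_less:
  fixes c e :: real
  assumes "0 < e"
  shows "\<exists>K\<ge>N. c / 2 ^ K < e"
proof -
  have "eventually (\<lambda>K. c / 2 ^ K < e) sequentially"
    using order_tendstoD(2)[OF div_pow2_tendsto_0 assms] .
  then obtain M where "\<forall>K\<ge>M. c / 2 ^ K < e"
    unfolding eventually_sequentially by blast
  then show ?thesis
    by (intro exI[of _ "max M N"]) simp
qed

lemma Cauchy_inverse_cf_fin:
  assumes "pos_quotients s"
  shows "Cauchy (\<lambda>n. 1 / cf_fin s n)"
proof (rule metric_CauchyI)
  fix e :: real
  assume "0 < e"
  then obtain K where K: "2 / 2 ^ K < e"
    using ex_div_pow2_less[of e 0 2] by blast
  show "\<exists>K. \<forall>m\<ge>K. \<forall>n\<ge>K. dist (1 / cf_fin s m) (1 / cf_fin s n) < e"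
  proof (intro exI allI impI)
    fix m n
    assume "K \<le> m" "K \<le> n"
    then have "\<bar>1 / cf_fin s m - 1 / cf_fin s n\<bar> \<le> 2 / 2 ^ K"
      by (intro inverse_cf_fin_dist[OF assms assms]) auto
    then show "dist (1 / cf_fin s m) (1 / cf_fin s n) < e"
      using K by (simp add: dist_real_def)
  qed
qed

lemma cf_fin_tendsto:
  assumes "pos_quotients s"
  shows "cf_fin s \<longlonglongrightarrow> cf s"
proof -
  obtain l where l: "(\<lambda>n. 1 / cf_fin s n) \<longlonglongrightarrow> l"
    using Cauchy_inverse_cf_fin[OF assms] Cauchy_convergent_iff convergent_def by blast
  have "1 / (s 0 + 1) \<le> 1 / cf_fin s n" for n
    using cf_fin_bounds[OF assms, of n] cf_fin_ge_1[OF assms, of n] by (intro frac_le) auto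
  then have "1 / (s 0 + 1) \<le> l"
    using LIMSEQ_le_const[OF l] by blast
  then have "0 < l"
    by (rule less_le_trans[rotated]) simp
  then have "(\<lambda>n. 1 / (1 / cf_fin s n)) \<longlonglongrightarrow> 1 / l"
    by (intro tendsto_intros l) simp
  then have "convergent (cf_fin s)"
    by (auto simp: convergent_def)
  then show ?thesis
    by (simp add: cf_def convergent_LIMSEQ_iff)
qed

lemma cf_bounds:
  assumes "pos_quotients s"
  shows "s 0 \<le> cf s \<and> cf s \<le> s 0 + 1"
  using LIMSEQ_le_const[OF cf_fin_tendsto[OF assms]] LIMSEQ_le_const2[OF cf_fin_tendsto[OF assms]]
    cf_fin_bounds[OF assms] by blast

lemma cf_ge_1:
  assumes "pos_quotients s"
  shows "1 \<le> cf s"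
  using cf_bounds[OF assms] assms unfolding pos_quotients_def
  by (metis of_nat_1 of_nat_le_iff order.trans)

lemma cf_step:
  assumes "pos_quotients (\<lambda>k. a (Suc k))"
  shows "cf a = a 0 + 1 / cf (\<lambda>k. a (Suc k))"
proof -
  let ?t = "\<lambda>k. a (Suc k)"
  have "(\<lambda>n. a 0 + 1 / cf_fin ?t n) \<longlonglongrightarrow> a 0 + 1 / cf ?t"
    using cf_fin_tendsto[OF assms] cf_ge_1[OF assms] by (intro tendsto_intros) auto
  then have "(\<lambda>n. cf_fin a (Suc n)) \<longlonglongrightarrow> a 0 + 1 / cf ?t"
    by simp
  then have "cf_fin a \<longlonglongrightarrow> a 0 + 1 / cf ?t"
    by (rule LIMSEQ_imp_Suc)
  then show ?thesis
    by (simp add: cf_def limI)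
qed

fun cf_prefix :: "nat list \<Rightarrow> real \<Rightarrow> real" where
  "cf_prefix [] x = x"
| "cf_prefix (c # cs) x = c + 1 / cf_prefix cs x"

lemma cf_eq_cf_prefix:
  assumes "pos_quotients (\<lambda>k. a (Suc k))"
  shows "cf a = cf_prefix (map a [0..<n]) (cf (\<lambda>k. a (k + n)))"
  using assms
proof (induction n arbitrary: a)
  case 0
  then show ?case by simp
next
  case (Suc n)
  have "pos_quotients (\<lambda>k. a (Suc (Suc k)))"
    using Suc.prems unfolding pos_quotients_def by simp
  then have "cf (\<lambda>k. a (Suc k)) = cf_prefix (map (\<lambda>k. a (Suc k)) [0..<n]) (cf (\<lambda>k. a (k + Suc n)))"
    using Suc.IH[of "\<lambda>k. a (Suc k)"] by simp
  moreover have "map a [0..<Suc n] = a 0 # map (\<lambda>k. a (Suc k)) [0..<n]"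
    by (simp add: map_upt_Suc del: upt_Suc)
  ultimately show ?case
    using cf_step[OF Suc.prems] by simp
qed

lemma inverse_cf_dist:
  assumes "pos_quotients s" "pos_quotients t" "\<forall>k<K. s k = t k"
  shows "\<bar>1 / cf s - 1 / cf t\<bar> \<le> 2 / 2 ^ K"
proof -
  have "(\<lambda>n. \<bar>1 / cf_fin s n - 1 / cf_fin t n\<bar>) \<longlonglongrightarrow> \<bar>1 / cf s - 1 / cf t\<bar>"
    using cf_fin_tendsto[OF assms(1)] cf_fin_tendsto[OF assms(2)] cf_ge_1[OF assms(1)] cf_ge_1[OF assms(2)]
    by (intro tendsto_intros) auto
  moreover have "\<forall>n\<ge>K. \<bar>1 / cf_fin s n - 1 / cf_fin t n\<bar> \<le> 2 / 2 ^ K"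
    using inverse_cf_fin_dist[OF assms] by blast
  ultimately show ?thesis
    by (meson LIMSEQ_le_const2)
qed

lemma inverse_cf_le:
  assumes "pos_quotients s"
  shows "1 / cf s \<le> 1 / s 0"
proof (rule frac_le)
  show "0 < real (s 0)"
    using assms unfolding pos_quotients_def by (simp add: Suc_le_eq)
  show "real (s 0) \<le> cf s"
    using cf_bounds[OF assms] by simp
qed simp_all

definition cycle :: "nat list \<Rightarrow> nat \<Rightarrow> nat" where
  "cycle xs k = xs ! (k mod length xs)"

lemma pos_quotients_cycle:
  assumes "xs \<noteq> []" "\<forall>x\<in>set xs. 1 \<le> x"
  shows "pos_quotients (cycle xs)"
  using assms unfolding pos_quotients_def cycle_def by simp

lemma pos_quotients_cycle_1312: "pos_quotients (cycle [1,3,1,2])"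
  by (rule pos_quotients_cycle) auto

lemma cf_eq_cf_prefixI:
  assumes "map a [0..<length xs] = xs" "(\<lambda>k. a (k + length xs)) = t" "pos_quotients t"
    "\<forall>x\<in>set (tl xs). 1 \<le> x"
  shows "cf a = cf_prefix xs (cf t)"
proof -
  define n where "n = length xs"
  have xs: "map a [0..<n] = xs" and t: "(\<lambda>k. a (k + n)) = t"
    using assms(1,2) unfolding n_def by simp_all
  have "1 \<le> a (Suc k)" for k
  proof (cases "Suc k < n")
    case True
    then have "a (Suc k) \<in> a ` {1..<n}"
      by simp
    also have "a ` {1..<n} = set (tl xs)"
      by (simp flip: xs map_tl add: tl_upt)
    finally show ?thesis
      using assms(4) by blast
  next
    case False
    then have "a (Suc k) = t (Suc k - n)"
      using fun_cong[OF t, of "Suc k - n"] by simp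
    then show ?thesis
      using assms(3) unfolding pos_quotients_def by simp
  qed
  then have "pos_quotients (\<lambda>k. a (Suc k))"
    unfolding pos_quotients_def by blast
  from cf_eq_cf_prefix[OF this, of n] show ?thesis
    using xs t by simp
qed

section \<open>The function lambda0\<close>

lemma pos_seq_shift: "pos_seq a \<Longrightarrow> pos_seq (shift p a)"
  unfolding pos_seq_def shift_def by simp

lemma lambda0_eq:
  assumes "pos_seq c"
  shows "lambda0 c = c 0 + 1 / cf (\<lambda>k. c (1 + int k)) + 1 / cf (\<lambda>k. c (- 1 - int k))"
proof -
  have "pos_quotients (\<lambda>k. c (int (Suc k)))"
    and "pos_quotients (\<lambda>k. if Suc k = 0 then 0 else c (- int (Suc k)))"
    using assms unfolding pos_seq_def pos_quotients_def by simp_all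
  from this[THEN cf_step] show ?thesis
    unfolding lambda0_def by (simp add: add_ac)
qed

lemma lambda0_reflect:
  assumes "pos_seq c"
  shows "lambda0 (\<lambda>j. c (- j)) = lambda0 c"
proof -
  have "pos_seq (\<lambda>j. c (- j))"
    using assms unfolding pos_seq_def by simp
  then show ?thesis
    using lambda0_eq[OF assms] lambda0_eq[of "\<lambda>j. c (- j)"] by (simp add: add_ac)
qed

lemma lambda0_le_neighbours:
  assumes "pos_seq c"
  shows "lambda0 c \<le> c 0 + 1 / c 1 + 1 / c (- 1)"
proof -
  have "pos_quotients (\<lambda>k. c (1 + int k))" "pos_quotients (\<lambda>k. c (- 1 - int k))"
    using assms unfolding pos_seq_def pos_quotients_def by simp_all
  from this[THEN inverse_cf_le] show ?thesis
    unfolding lambda0_eq[OF assms] by simp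
qed

lemma lambda0_dist:
  assumes "pos_seq c" "pos_seq d" "\<forall>j. \<bar>j\<bar> \<le> int K \<longrightarrow> c j = d j"
  shows "\<bar>lambda0 c - lambda0 d\<bar> \<le> 4 / 2 ^ K"
proof -
  have pos: "pos_quotients (\<lambda>k. c (1 + int k))" "pos_quotients (\<lambda>k. d (1 + int k))"
    "pos_quotients (\<lambda>k. c (- 1 - int k))" "pos_quotients (\<lambda>k. d (- 1 - int k))"
    using assms(1,2) unfolding pos_seq_def pos_quotients_def by simp_all
  have "\<forall>k<K. c (1 + int k) = d (1 + int k)" "\<forall>k<K. c (- 1 - int k) = d (- 1 - int k)"
    and "c 0 = d 0"
    using assms(3) by auto
  then have "\<bar>1 / cf (\<lambda>k. c (1 + int k)) - 1 / cf (\<lambda>k. d (1 + int k))\<bar> \<le> 2 / 2 ^ K"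
    "\<bar>1 / cf (\<lambda>k. c (- 1 - int k)) - 1 / cf (\<lambda>k. d (- 1 - int k))\<bar> \<le> 2 / 2 ^ K"
    using inverse_cf_dist[OF pos(1,2)] inverse_cf_dist[OF pos(3,4)] by blast+
  with \<open>c 0 = d 0\<close> show ?thesis
    unfolding lambda0_eq[OF assms(1)] lambda0_eq[OF assms(2)] by (simp add: abs_le_iff)
qed

section \<open>Two quadratic irrationals\<close>

lemma fixpoint_cf_prefix_4:
  fixes y :: real
  assumes "cf_prefix [4] y = y" "4 \<le> y"
  shows "y = 2 + sqrt 5"
proof -
  have "(y - 2)\<^sup>2 = 5" "0 \<le> y - 2"
    using assms by (auto simp: field_simps power2_eq_square)
  then show ?thesis
    using real_sqrt_unique by fastforce
qed

lemma fixpoint_cf_prefix_1312: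
  fixes y :: real
  assumes "cf_prefix [1,3,1,2] y = y" "1 \<le> y"
  shows "y = (5 + 4 * sqrt 5) / 11"
proof -
  have "((11 * y - 5) / 4)\<^sup>2 = 5" "0 \<le> (11 * y - 5) / 4"
    using assms by (auto simp: field_simps power2_eq_square)
  then have "sqrt 5 = (11 * y - 5) / 4"
    by (rule real_sqrt_unique)
  then show ?thesis
    by simp
qed

lemma cf_const_4: "cf (\<lambda>_. 4) = 2 + sqrt 5"
proof (rule fixpoint_cf_prefix_4)
  have pos: "pos_quotients (\<lambda>_. 4)"
    by (simp add: pos_quotients_def)
  show "cf_prefix [4] (cf (\<lambda>_. 4)) = cf (\<lambda>_. 4)"
    by (rule sym, rule cf_eq_cf_prefixI[OF _ _ pos]) simp_all
  show "4 \<le> cf (\<lambda>_. 4)"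
    using cf_bounds[OF pos] by simp
qed

lemma cf_cycle_1312: "cf (cycle [1,3,1,2]) = (5 + 4 * sqrt 5) / 11"
proof (rule fixpoint_cf_prefix_1312)
  show "cf_prefix [1,3,1,2] (cf (cycle [1,3,1,2])) = cf (cycle [1,3,1,2])"
    by (rule sym, rule cf_eq_cf_prefixI[OF _ _ pos_quotients_cycle_1312])
      (simp_all add: cycle_def upt_rec fun_eq_iff)
  show "1 \<le> cf (cycle [1,3,1,2])"
    by (rule cf_ge_1[OF pos_quotients_cycle_1312])
qed

lemma sqrt5_bounds: "2 < sqrt (5::real)" "sqrt (5::real) < 3"
  by (simp_all add: real_less_rsqrt real_sqrt_less_iff[of 5 9, simplified])

lemma inverse_cf_const_4: "1 / cf (\<lambda>_. 4) = sqrt 5 - 2"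
  unfolding cf_const_4 using sqrt5_bounds by (simp add: field_simps)

lemma inverse_cf_prefix_3_1312: "1 / cf_prefix [3] (cf (cycle [1,3,1,2])) = 5/2 - sqrt 5"
  unfolding cf_cycle_1312 using sqrt5_bounds by (simp add: field_simps)

lemma inverse_cf_prefix_12_1312: "1 / cf_prefix [1,2] (cf (cycle [1,3,1,2])) = sqrt 5 - 3/2"
  unfolding cf_cycle_1312 using sqrt5_bounds by (simp add: field_simps)

lemma inverse_cf_prefix_13_4: "1 / cf_prefix [1,3] (cf (\<lambda>_. 4)) = 3 - sqrt 5"
  unfolding cf_const_4 using sqrt5_bounds by (simp add: field_simps)

lemma cycle_1213: "[1,2,1,3] ! ((k + 2) mod 4) = cycle [1,3,1,2] k"
proof -
  define r where "r = k mod 4"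
  have "(k + 2) mod 4 = (r + 2) mod 4"
    unfolding r_def by (rule mod_add_left_eq[symmetric])
  then have "[1,2,1,3] ! ((k + 2) mod 4) = [1,2,1,3] ! ((r + 2) mod 4)"
    by (simp only:)
  also have "\<dots> = [1,3,1,2] ! r"
  proof -
    have "r = 0 \<or> r = 1 \<or> r = 2 \<or> r = 3"
      unfolding r_def by linarith
    then show ?thesis
      by auto
  qed
  also have "\<dots> = cycle [1,3,1,2] k"
    unfolding cycle_def r_def by simp
  finally show ?thesis .
qed

lemma cf_sum_eq_nine_halves_1:
  "cf (\<lambda>_. 4) + cf (\<lambda>k. if k = 0 then 0 else if k = 1 then 3 else [1,3,1,2] ! ((k - 2) mod 4))
    = 9/2"
proof -
  have "cf (\<lambda>k. if k = 0 then 0 else if k = 1 then 3 else [1,3,1,2] ! ((k - 2) mod 4))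
      = cf_prefix [0,3] (cf (cycle [1,3,1,2]))"
    by (rule cf_eq_cf_prefixI)
      (use pos_quotients_cycle_1312 in \<open>simp_all add: upt_rec cycle_def fun_eq_iff\<close>)
  then show ?thesis
    using cf_const_4 inverse_cf_prefix_3_1312 by simp
qed

lemma cf_sum_eq_nine_halves_2:
  "cf (\<lambda>k. if k = 0 then 3 else if k = 1 then 1 else if k = 2 then 3 else 4)
    + cf (\<lambda>k. if k = 0 then 0 else [1,2,1,3] ! ((k - 1) mod 4)) = 9/2"
proof -
  have "cf (\<lambda>k. if k = 0 then 3 else if k = 1 then 1 else if k = 2 then 3 else 4)
      = cf_prefix [3,1,3] (cf (\<lambda>_. 4))"
    by (rule cf_eq_cf_prefixI) (simp_all add: upt_rec pos_quotients_def)
  moreover have "cf (\<lambda>k. if k = 0 then 0 else [1,2,1,3] ! ((k - 1) mod 4))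
      = cf_prefix [0,1,2] (cf (cycle [1,3,1,2]))"
    by (rule cf_eq_cf_prefixI)
      (use pos_quotients_cycle_1312 cycle_1213 in \<open>simp_all add: upt_rec fun_eq_iff\<close>)
  ultimately show ?thesis
    using inverse_cf_prefix_13_4 inverse_cf_prefix_12_1312 by simp
qed

section \<open>The Markov value of seqA\<close>

lemma seqA_neg [simp]: "i < 0 \<Longrightarrow> seqA i = 4"
  unfolding seqA_def by simp

lemma seqA_0 [simp]: "seqA 0 = 3"
  unfolding seqA_def by simp

lemma seqA_pos: "0 < i \<Longrightarrow> seqA i = cycle [1,3,1,2] (nat (i - 1))"
  unfolding seqA_def cycle_def by (simp add: nat_mod_distrib)

lemma seqA_Suc: "seqA (1 + int k) = cycle [1,3,1,2] k"
  by (simp add: seqA_pos)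

lemma seqA_add_4: "0 < i \<Longrightarrow> seqA (i + 4) = seqA i"
proof -
  have "(i + 4 - 1) mod 4 = (i - 1) mod 4"
    by presburger
  then show "0 < i \<Longrightarrow> seqA (i + 4) = seqA i"
    unfolding seqA_def by simp
qed

lemma seqA_add_mult_4: "0 < i \<Longrightarrow> seqA (i + 4 * int q) = seqA i"
proof (induction q)
  case (Suc q)
  then have "seqA (i + 4 * int (Suc q)) = seqA (i + 4 * int q + 4)"
    by (simp add: algebra_simps)
  also have "\<dots> = seqA i"
    using Suc by (simp add: seqA_add_4)
  finally show ?case .
qed simp

lemma pos_seq_seqA: "pos_seq seqA"
  unfolding pos_seq_def
proof
  fix i :: int
  show "1 \<le> seqA i"
  proof (cases "0 < i")
    case True
    then show ?thesis
      using pos_quotients_cycle_1312 by (simp add: seqA_pos pos_quotients_def)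
  qed (simp add: seqA_def)
qed

lemma lambda0_seqA_at_minus_1: "lambda0 (shift (-1) seqA) = 9/2"
proof -
  have "(\<lambda>k. shift (-1) seqA (1 + int k)) = (\<lambda>k. seqA (int k))"
    "(\<lambda>k. shift (-1) seqA (- 1 - int k)) = (\<lambda>_. 4)" "shift (-1) seqA 0 = 4"
    by (auto simp: shift_def)
  then have "lambda0 (shift (-1) seqA) = 4 + 1 / cf (\<lambda>k. seqA (int k)) + 1 / cf (\<lambda>_. 4)"
    using lambda0_eq[OF pos_seq_shift[OF pos_seq_seqA], of "-1"] by simp
  also have "cf (\<lambda>k. seqA (int k)) = cf_prefix [3] (cf (cycle [1,3,1,2]))"
    by (rule cf_eq_cf_prefixI) (use pos_quotients_cycle_1312 in \<open>simp_all add: seqA_Suc add.commute\<close>)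
  finally show ?thesis
    using inverse_cf_prefix_3_1312 inverse_cf_const_4 by simp
qed

lemma lambda0_seqA_at_2: "lambda0 (shift 2 seqA) = 9/2"
proof -
  have "(\<lambda>k. shift 2 seqA (1 + int k)) = (\<lambda>k. seqA (1 + int (k + 2)))"
    "(\<lambda>k. shift 2 seqA (- 1 - int k)) = (\<lambda>k. seqA (1 - int k))" "shift 2 seqA 0 = 3"
    by (auto simp: shift_def seqA_pos cycle_def algebra_simps)
  then have "lambda0 (shift 2 seqA)
      = 3 + 1 / cf (\<lambda>k. seqA (1 + int (k + 2))) + 1 / cf (\<lambda>k. seqA (1 - int k))"
    using lambda0_eq[OF pos_seq_shift[OF pos_seq_seqA], of 2] by simp
  also have "cf (\<lambda>k. seqA (1 + int (k + 2))) = cf_prefix [1,2] (cf (cycle [1,3,1,2]))"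
    by (rule cf_eq_cf_prefixI) (use pos_quotients_cycle_1312 in
        \<open>simp_all only: seqA_Suc, simp_all add: cycle_def upt_rec fun_eq_iff\<close>)
  also have "cf (\<lambda>k. seqA (1 - int k)) = cf_prefix [1,3] (cf (\<lambda>_. 4))"
    by (rule cf_eq_cf_prefixI) (auto simp: upt_rec seqA_pos cycle_def pos_quotients_def)
  finally show ?thesis
    using inverse_cf_prefix_12_1312 inverse_cf_prefix_13_4 by simp
qed

lemma inverse_cf_le_14_19:
  assumes "pos_quotients s" "s 0 = 1" "s 1 = 2" "s 2 = 1" "s 3 = 3"
  shows "1 / cf s \<le> 14 / 19"
proof -
  let ?x = "cf (\<lambda>k. s (k + 3))"
  have pos: "pos_quotients (\<lambda>k. s (k + 3))"
    using assms(1) unfolding pos_quotients_def by simp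
  have x: "3 \<le> ?x" "?x \<le> 4"
    using cf_bounds[OF pos] assms(5) by simp_all
  have "cf s = cf_prefix [1,2,1] ?x"
    by (rule cf_eq_cf_prefixI) (use assms pos in \<open>simp_all add: upt_rec eval_nat_numeral\<close>)
  then have "cf s = (4 * ?x + 3) / (3 * ?x + 2)"
    using x by (simp add: field_simps)
  then have "1 / cf s = (3 * ?x + 2) / (4 * ?x + 3)"
    by simp
  also have "\<dots> \<le> 14 / 19"
    using x by (simp add: field_simps)
  finally show ?thesis .
qed

lemma lambda0_le_4:
  assumes "pos_seq c" "c 0 \<le> 2"
  shows "lambda0 c \<le> 4"
proof -
  have "1 \<le> c 1" "1 \<le> c (-1)"
    using assms(1) unfolding pos_seq_def by auto
  then have "1 / c 1 \<le> 1" "1 / c (-1) \<le> 1"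
    by simp_all
  then show ?thesis
    using lambda0_le_neighbours[OF assms(1)] assms(2) by linarith
qed

lemma lambda0_seqA_at_4q_6:
  "lambda0 (shift (4 * int q + 6) seqA) \<le> 3 + 28/19"
proof -
  let ?c = "shift (4 * int q + 6) seqA"
  have pos: "pos_seq ?c"
    by (rule pos_seq_shift[OF pos_seq_seqA])
  have c: "?c j = seqA (6 + j)" if "-5 \<le> j" for j
    using that seqA_add_mult_4[of "6 + j" q] by (simp add: shift_def algebra_simps)
  have pos_tails: "pos_quotients (\<lambda>k. ?c (1 + int k))" "pos_quotients (\<lambda>k. ?c (- 1 - int k))"
    using pos unfolding pos_seq_def pos_quotients_def by simp_all
  have "1 / cf (\<lambda>k. ?c (1 + int k)) \<le> 14/19"
    by (rule inverse_cf_le_14_19[OF pos_tails(1)]) (simp_all add: c seqA_pos cycle_def)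
  moreover have "1 / cf (\<lambda>k. ?c (- 1 - int k)) \<le> 14/19"
    by (rule inverse_cf_le_14_19[OF pos_tails(2)]) (simp_all add: c seqA_pos cycle_def)
  moreover have "?c 0 = 3"
    by (simp add: c seqA_pos cycle_def)
  ultimately show ?thesis
    unfolding lambda0_eq[OF pos] by simp
qed

lemma lambda0_shift_seqA_le_pos:
  assumes "0 < p"
  shows "lambda0 (shift p seqA) \<le> 9/2"
proof -
  define q where "q = nat (p - 1) div 4"
  define r where "r = nat (p - 1) mod 4"
  have "nat (p - 1) = r + 4 * q" "r < 4"
    unfolding q_def r_def by simp_all
  with assms have p: "p = 1 + int r + 4 * int q"
    by linarith
  consider "r \<noteq> 1" | "r = 1" "q = 0" | q' where "r = 1" "q = Suc q'"
    by (cases q) auto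
  then show ?thesis
  proof cases
    case 1
    with \<open>r < 4\<close> have "r = 0 \<or> r = 2 \<or> r = 3"
      by arith
    then have "shift p seqA 0 \<le> 2"
      by (auto simp: p shift_def seqA_add_mult_4 seqA_Suc cycle_def)
    then have "lambda0 (shift p seqA) \<le> 4"
      by (rule lambda0_le_4[OF pos_seq_shift[OF pos_seq_seqA]])
    then show ?thesis
      by simp
  next
    case 2
    then show ?thesis
      using lambda0_seqA_at_2 p by simp
  next
    case 3
    then have "p = 4 * int q' + 6"
      using p by simp
    then show ?thesis
      using lambda0_seqA_at_4q_6[of q'] by simp
  qed
qed

lemma lambda0_shift_seqA_le: "lambda0 (shift p seqA) \<le> 9/2"
proof -
  have pos: "pos_seq (shift p seqA)"
    by (rule pos_seq_shift[OF pos_seq_seqA])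
  consider "p \<le> -2" | "p = -1" | "p = 0" | "0 < p"
    by linarith
  then show ?thesis
  proof cases
    case 1
    then show ?thesis
      using lambda0_le_neighbours[OF pos] by (simp add: shift_def)
  next
    case 2
    then show ?thesis
      using lambda0_seqA_at_minus_1 by simp
  next
    case 3
    then show ?thesis
      using lambda0_le_neighbours[OF pos] by (simp add: shift_def seqA_pos cycle_def)
  next
    case 4
    then show ?thesis
      by (rule lambda0_shift_seqA_le_pos)
  qed
qed

lemma markov_m_seqA: "markov_m seqA = 9/2"
  unfolding markov_m_def
  by (rule cSup_eq_maximum) (use lambda0_seqA_at_minus_1 lambda0_shift_seqA_le in auto)

section \<open>Sequences built from blocks\<close>

lemma length_block: "length (block n) = 5 * n + 5"
  unfolding block_def by (induction n) auto

lemma length_concat_replicate [simp]: "length (concat (replicate n xs)) = n * length xs"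
  by (induction n) auto

lemma nth_concat_replicate:
  assumes "i < n * length xs"
  shows "concat (replicate n xs) ! i = xs ! (i mod length xs)"
  using assms
proof (induction n arbitrary: i)
  case 0
  then show ?case by simp
next
  case (Suc n)
  then show ?case
    by (cases "i < length xs") (auto simp: nth_append le_mod_geq)
qed

lemma nth_block:
  assumes "j \<le> 5 * n + 3"
  shows "block n ! j = seqA (int j - int n)"
proof -
  have block: "block n = replicate n 4 @ 3 # concat (replicate n [1,3,1,2]) @ [1,3,1,3]"
    unfolding block_def by simp
  consider "j < n" | "j = n" | "n < j" "j \<le> 5 * n" | "5 * n < j"
    by linarith
  then show ?thesis
  proof cases
    case 3
    then have "block n ! j = cycle [1,3,1,2] (j - n - 1)"
      unfolding block cycle_def
      by (simp add: nth_append length_concat_replicate nth_concat_replicate Suc_diff_Suc)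
    then show ?thesis
      using 3 by (simp add: seqA_pos nat_diff_distrib)
  next
    case 4
    define r where "r = j - 5 * n - 1"
    have j: "j = 5 * n + 1 + r" "r < 3"
      using 4 assms unfolding r_def by simp_all
    then have "block n ! j = [1,3,1,3] ! r"
      unfolding block by (simp add: nth_append)
    also have "\<dots> = [1,3,1,2] ! r"
      using j(2) by (auto simp: less_Suc_eq numeral_3_eq_3)
    also have "\<dots> = cycle [1,3,1,2] (4 * n + r)"
      using j(2) by (simp add: cycle_def)
    also have "\<dots> = seqA (1 + int (4 * n + r))"
      by (simp only: seqA_Suc)
    finally show ?thesis
      using j(1) by (simp add: algebra_simps)
  qed (simp_all add: block nth_append)
qed

lemma nth_block_last: "block n ! (5 * n + 4) = 3"
  unfolding block_def by (simp add: nth_append length_concat_replicate)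

lemma cycle_1312_add: "cycle [1,3,1,2] (4 * m + k) = cycle [1,3,1,2] k"
  by (simp add: cycle_def)

lemma cycle_1312_reflect:
  assumes "k \<le> 4 * n + 2"
  shows "cycle [1,3,1,2] (4 * n + 2 - k) = cycle [1,3,1,2] k"
proof -
  define q where "q = k div 4"
  define r where "r = k mod 4"
  have k: "k = 4 * q + r" "r < 4"
    unfolding q_def r_def by simp_all
  then consider "r \<le> 2" "4 * n + 2 - k = 4 * (n - q) + (2 - r)" | "r = 3" "4 * n + 2 - k = 4 * (n - q - 1) + 3"
    using assms by arith
  then have "cycle [1,3,1,2] (4 * n + 2 - k) = cycle [1,3,1,2] r"
  proof cases
    case 1
    then have "r = 0 \<or> r = 1 \<or> r = 2"
      by arith
    with 1 show ?thesis
      by (auto simp only: cycle_1312_add) (auto simp: cycle_def)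
  next
    case 2
    then show ?thesis
      by (simp only: cycle_1312_add)
  qed
  also have "\<dots> = cycle [1,3,1,2] k"
    by (simp only: k(1) cycle_1312_add)
  finally show ?thesis .
qed

lemma seqA_reflect:
  assumes "1 \<le> i" "i \<le> 4 * int n + 3"
  shows "seqA (4 * int n + 4 - i) = seqA i"
proof -
  define k where "k = nat (i - 1)"
  have i: "i = 1 + int k" and k: "k \<le> 4 * n + 2"
    using assms unfolding k_def by simp_all
  have "4 * int n + 4 - i = 1 + int (4 * n + 2 - k)"
    using i k by simp
  then have "seqA (4 * int n + 4 - i) = cycle [1,3,1,2] (4 * n + 2 - k)"
    by (simp only: seqA_Suc)
  also have "\<dots> = cycle [1,3,1,2] k"
    using k by (rule cycle_1312_reflect)
  also have "\<dots> = seqA i"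
    by (simp only: i seqA_Suc)
  finally show ?thesis .
qed

definition block_at :: "(int \<Rightarrow> nat) \<Rightarrow> int \<Rightarrow> nat \<Rightarrow> bool" where
  "block_at a s n \<longleftrightarrow> (\<forall>j<5 * n + 5. a (s + int j) = block n ! j)"

lemma block_at_seqA:
  assumes "block_at a s n" "s \<le> t" "t \<le> s + 5 * int n + 3"
  shows "a t = seqA (t - s - int n)"
proof -
  define j where "j = nat (t - s)"
  have "t = s + int j" "j \<le> 5 * n + 3"
    using assms(2,3) unfolding j_def by auto
  then show ?thesis
    using assms(1) nth_block[of j n] unfolding block_at_def by auto
qed

lemma block_at_seqA_reflected:
  assumes "block_at a s n" "s + int n + 1 \<le> t" "t \<le> s + 5 * int n + 4"
  shows "a t = seqA (s + 5 * int n + 4 - t)"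
proof (cases "t = s + 5 * int n + 4")
  case True
  have "a (s + int (5 * n + 4)) = block n ! (5 * n + 4)"
    using assms(1)[unfolded block_at_def, rule_format, of "5 * n + 4"] by simp
  then show ?thesis
    using True nth_block_last[of n] by (simp add: add.assoc)
next
  case False
  then have "a t = seqA (t - s - int n)"
    using assms by (intro block_at_seqA) auto
  also have "\<dots> = seqA (4 * int n + 4 - (t - s - int n))"
    using False assms by (intro seqA_reflect[symmetric]) auto
  finally show ?thesis
    by (simp add: algebra_simps)
qed

lemma lambda0_dist_seqA_window:
  assumes "pos_seq a" "\<forall>t. \<bar>t - p\<bar> \<le> int K \<longrightarrow> a t = seqA (t - c)"
  shows "\<bar>lambda0 (shift p a) - lambda0 (shift (p - c) seqA)\<bar> \<le> 4 / 2 ^ K"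
  using assms(2)
  by (intro lambda0_dist pos_seq_shift assms(1) pos_seq_seqA) (auto simp: shift_def algebra_simps)

lemma lambda0_le_seqA_window:
  assumes "pos_seq a" "\<forall>t. \<bar>t - p\<bar> \<le> int K \<longrightarrow> a t = seqA (t - c)"
  shows "lambda0 (shift p a) \<le> 9/2 + 4 / 2 ^ K"
  using lambda0_dist_seqA_window[OF assms] lambda0_shift_seqA_le[of "p - c"] by linarith

lemma lambda0_le_reflected_seqA_window:
  assumes "pos_seq a" "\<forall>t. \<bar>t - p\<bar> \<le> int K \<longrightarrow> a t = seqA (c - t)"
  shows "lambda0 (shift p a) \<le> 9/2 + 4 / 2 ^ K"
proof -
  have "pos_seq (\<lambda>j. shift (c - p) seqA (- j))"
    using pos_seq_seqA unfolding pos_seq_def shift_def by simp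
  then have "\<bar>lambda0 (shift p a) - lambda0 (\<lambda>j. shift (c - p) seqA (- j))\<bar> \<le> 4 / 2 ^ K"
    using assms(2) by (intro lambda0_dist pos_seq_shift assms(1)) (auto simp: shift_def algebra_simps)
  moreover have "lambda0 (\<lambda>j. shift (c - p) seqA (- j)) = lambda0 (shift (c - p) seqA)"
    by (rule lambda0_reflect[OF pos_seq_shift[OF pos_seq_seqA]])
  ultimately show ?thesis
    using lambda0_shift_seqA_le[of "c - p"] by linarith
qed

lemma block_junction_seqA:
  assumes "block_at a (s - 5 * int n' - 5) n'" "block_at a s n"
    "s - 4 * int n' - 4 \<le> t" "t < s + int n"
  shows "a t = seqA (s - 1 - t)"
proof (cases "t < s")
  case True
  have "a t = seqA (s - 5 * int n' - 5 + 5 * int n' + 4 - t)"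
    using assms(3) True by (intro block_at_seqA_reflected[OF assms(1)]) auto
  then show ?thesis
    by simp
next
  case False
  have "a t = seqA (t - s - int n)"
    using assms(4) False by (intro block_at_seqA[OF assms(2)]) auto
  then show ?thesis
    using assms(4) False by simp
qed

lemma lambda0_le_in_block:
  assumes "pos_seq a" and blocks: "block_at a (s - 5 * int n' - 5) n'" "block_at a s n"
    "block_at a (s + 5 * int n + 5) n''"
    and K: "2 * K \<le> n" "K \<le> n'" "K \<le> n''" and p: "s \<le> p" "p \<le> s + 5 * int n + 4"
  shows "lambda0 (shift p a) \<le> 9/2 + 4 / 2 ^ K"
proof -
  have window: "p - int K \<le> t \<and> t \<le> p + int K" if "\<bar>t - p\<bar> \<le> int K" for t
    using that by (simp add: abs_le_iff)
  have next_block: "block_at a (s + 5 * int n + 5 - 5 * int n - 5) n"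
    using blocks(2) by simp
  consider "p + int K < s + int n" | "s + int n - int K \<le> p" "p + int K \<le> s + 5 * int n + 3"
    | "s + 5 * int n + 4 - int K \<le> p"
    by linarith
  then show ?thesis
  proof cases
    case 1
    then have "\<forall>t. \<bar>t - p\<bar> \<le> int K \<longrightarrow> a t = seqA (s - 1 - t)"
      using window p K by (auto intro!: block_junction_seqA[OF blocks(1,2)])
    then show ?thesis
      by (rule lambda0_le_reflected_seqA_window[OF assms(1)])
  next
    case 2
    then have "\<forall>t. \<bar>t - p\<bar> \<le> int K \<longrightarrow> a t = seqA (t - s - int n)"
      using window K by (auto intro!: block_at_seqA[OF blocks(2)])
    then have "\<forall>t. \<bar>t - p\<bar> \<le> int K \<longrightarrow> a t = seqA (t - (s + int n))"
      by (simp add: diff_diff_eq)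
    then show ?thesis
      by (rule lambda0_le_seqA_window[OF assms(1)])
  next
    case 3
    have "a t = seqA (s + 5 * int n + 5 - 1 - t)" if "\<bar>t - p\<bar> \<le> int K" for t
      using window[OF that] 3 p K by (intro block_junction_seqA[OF next_block blocks(3)]) auto
    then show ?thesis
      by (intro lambda0_le_reflected_seqA_window[OF assms(1)]) blast
  qed
qed

lemma lambda0_ge_in_block:
  assumes "pos_seq a" "block_at a s n" "K < n"
  shows "9/2 - 4 / 2 ^ K \<le> lambda0 (shift (s + int n - 1) a)"
proof -
  have "a t = seqA (t - (s + int n))" if "\<bar>t - (s + int n - 1)\<bar> \<le> int K" for t
    using that assms(3) block_at_seqA[OF assms(2), of t] by (simp add: algebra_simps)
  then have "\<bar>lambda0 (shift (s + int n - 1) a) - lambda0 (shift (-1) seqA)\<bar> \<le> 4 / 2 ^ K"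
    using lambda0_dist_seqA_window[OF assms(1), of "s + int n - 1" K "s + int n"] by simp
  then show ?thesis
    using lambda0_seqA_at_minus_1 by linarith
qed

section \<open>The periodic sequences\<close>

lemma pos_seq_periodic_block: "pos_seq (periodic_seq (block n))"
proof -
  have "x \<in> set (block n) \<Longrightarrow> 1 \<le> x" for x
    unfolding block_def by (cases "n = 0") auto
  moreover have "nat (i mod int (length (block n))) < length (block n)" for i
    using length_block[of n] by (simp add: nat_less_iff)
  ultimately show ?thesis
    unfolding pos_seq_def periodic_seq_def by (meson nth_mem)
qed

lemma block_at_periodic_block:
  assumes "int (5 * n + 5) dvd s"
  shows "block_at (periodic_seq (block n)) s n"
  unfolding block_at_def periodic_seq_def length_block
proof (intro allI impI)
  fix j
  assume "j < 5 * n + 5"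
  moreover have "(s + int j) mod int (5 * n + 5) = int j mod int (5 * n + 5)"
    using assms by (simp add: mod_add_left_eq[symmetric])
  ultimately show "block n ! nat ((s + int j) mod int (5 * n + 5)) = block n ! j"
    by simp
qed

lemma markov_m_periodic_block_dist:
  assumes "1 \<le> K" "2 * K \<le> n"
  shows "\<bar>markov_m (periodic_seq (block n)) - 9/2\<bar> \<le> 4 / 2 ^ K"
proof -
  let ?a = "periodic_seq (block n)" and ?L = "int (5 * n + 5)"
  have upper: "lambda0 (shift p ?a) \<le> 9/2 + 4 / 2 ^ K" for p
  proof -
    define s where "s = ?L * (p div ?L)"
    have "s \<le> p" "p \<le> s + 5 * int n + 4"
      using pos_mod_bound[of ?L p] pos_mod_sign[of ?L p] mult_div_mod_eq[of ?L p]
      unfolding s_def by linarith+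
    moreover have "s - 5 * int n - 5 = ?L * (p div ?L - 1)" "s + 5 * int n + 5 = ?L * (p div ?L + 1)"
      unfolding s_def by (simp_all add: algebra_simps)
    then have "block_at ?a (s - 5 * int n - 5) n" "block_at ?a s n" "block_at ?a (s + 5 * int n + 5) n"
      unfolding s_def by (metis block_at_periodic_block dvd_triv_left)+
    ultimately show ?thesis
      using assms by (intro lambda0_le_in_block[OF pos_seq_periodic_block]) auto
  qed
  have lower: "9/2 - 4 / 2 ^ K \<le> lambda0 (shift (int n - 1) ?a)"
    using lambda0_ge_in_block[OF pos_seq_periodic_block block_at_periodic_block, of n 0 K] assms
    by simp
  have "markov_m ?a \<le> 9/2 + 4 / 2 ^ K"
    unfolding markov_m_def by (rule cSUP_least) (use upper in auto)
  moreover have "bdd_above (range (\<lambda>p. lambda0 (shift p ?a)))"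
    by (rule bdd_aboveI2) (rule upper)
  then have "lambda0 (shift (int n - 1) ?a) \<le> markov_m ?a"
    unfolding markov_m_def by (rule cSUP_upper[rotated]) simp
  ultimately show ?thesis
    using lower by linarith
qed

lemma markov_m_periodic_block_tendsto: "(\<lambda>n. markov_m (periodic_seq (block n))) \<longlonglongrightarrow> 9/2"
proof (rule LIMSEQ_I)
  fix e :: real
  assume "0 < e"
  then obtain K where K: "1 \<le> K" "4 / 2 ^ K < e"
    using ex_div_pow2_less by blast
  show "\<exists>n0. \<forall>n\<ge>n0. norm (markov_m (periodic_seq (block n)) - 9/2) < e"
    using markov_m_periodic_block_dist[OF K(1)] K(2) by force
qed

section \<open>A sequence with limsup 9/2\<close>

text \<open>Level m is the interval from level_start m to level_start (Suc m), tiled by copies of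
  block m.  Since level_start m = 5 (m+1)! is divisible by both 5m and 5m + 5, a level starts
  and ends with complete blocks.\<close>

definition level_start :: "nat \<Rightarrow> int" where
  "level_start m = 5 * int (fact (m + 1))"

definition level :: "int \<Rightarrow> nat" where
  "level i = (LEAST m. i < level_start (Suc m))"

definition lagrange_witness :: "int \<Rightarrow> nat" where
  "lagrange_witness i = periodic_seq (block (level i)) i"

lemma level_start_eq: "level_start m = int (5 * m + 5) * fact m"
  unfolding level_start_def by (simp add: algebra_simps)

lemma level_start_Suc: "level_start (Suc m) = int (m + 2) * level_start m"
  unfolding level_start_def by (simp add: algebra_simps)

lemma level_start_ge: "5 * int m + 5 \<le> level_start m"
proof -
  have "5 * (m + 1) \<le> 5 * fact (m + 1)"
    by (intro mult_le_mono2 fact_ge_self)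
  then have "int (5 * (m + 1)) \<le> int (5 * fact (m + 1))"
    by (rule of_nat_mono)
  then show ?thesis
    unfolding level_start_def by simp
qed

lemma level_start_mono: "m \<le> m' \<Longrightarrow> level_start m \<le> level_start m'"
  using fact_mono[of "m + 1" "m' + 1", where 'a = nat] unfolding level_start_def by linarith

lemma level_start_gap: "level_start m + int (5 * m + 5) \<le> level_start (Suc m)"
proof -
  have "1 * level_start m \<le> (int m + 1) * level_start m"
    using level_start_ge[of m] by (intro mult_right_mono) auto
  moreover have "level_start (Suc m) = level_start m + (int m + 1) * level_start m"
    by (simp add: level_start_Suc algebra_simps)
  moreover have "int (5 * m + 5) = 5 * int m + 5"
    by simp
  ultimately show ?thesis
    using level_start_ge[of m] by linarith
qed

lemma dvd_level_start: "int (5 * m + 5) dvd level_start m"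
  unfolding level_start_eq by simp

lemma dvd_level_start_Suc: "int (5 * m + 5) dvd level_start (Suc m)"
  using dvd_level_start[of m] unfolding level_start_Suc by simp

lemma level_less: "i < level_start (Suc (level i))"
proof -
  have "i \<le> int (nat i)"
    by simp
  also have "\<dots> < 5 * int (Suc (nat i)) + 5"
    by simp
  also have "\<dots> \<le> level_start (Suc (nat i))"
    by (rule level_start_ge)
  finally have "i < level_start (Suc (nat i))" .
  then show ?thesis
    unfolding level_def by (rule LeastI)
qed

lemma level_ge:
  assumes "1 \<le> level i"
  shows "level_start (level i) \<le> i"
proof -
  have "\<not> i < level_start (Suc (level i - 1))"
    unfolding level_def by (rule not_less_Least) (use assms in \<open>simp add: level_def\<close>)
  then show ?thesis
    using assms by simp
qed

lemma level_eqI: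
  assumes "level_start m \<le> i" "i < level_start (Suc m)"
  shows "level i = m"
  unfolding level_def
proof (rule Least_equality)
  fix y
  assume "i < level_start (Suc y)"
  show "m \<le> y"
  proof (rule ccontr)
    assume "\<not> m \<le> y"
    then have "level_start (Suc y) \<le> level_start m"
      by (intro level_start_mono) simp
    with assms(1) \<open>i < level_start (Suc y)\<close> show False
      by linarith
  qed
qed (rule assms(2))

lemma le_level: "level_start m \<le> i \<Longrightarrow> m \<le> level i"
  using level_less[of i] level_start_mono[of "Suc (level i)" m] by linarith

lemma pos_seq_lagrange_witness: "pos_seq lagrange_witness"
  using pos_seq_periodic_block unfolding pos_seq_def lagrange_witness_def by blast

lemma block_at_lagrange_witness:
  assumes "level_start m \<le> s" "s + int (5 * m + 5) \<le> level_start (Suc m)" "int (5 * m + 5) dvd s"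
  shows "block_at lagrange_witness s m"
  unfolding block_at_def
proof (intro allI impI)
  fix j
  assume "j < 5 * m + 5"
  then have "level (s + int j) = m"
    using assms by (intro level_eqI) auto
  then show "lagrange_witness (s + int j) = block m ! j"
    using block_at_periodic_block[OF assms(3)] \<open>j < 5 * m + 5\<close>
    unfolding lagrange_witness_def block_at_def by simp
qed

lemma block_at_lagrange_witness_first: "block_at lagrange_witness (level_start m) m"
  using level_start_gap dvd_level_start by (intro block_at_lagrange_witness) auto

lemma block_at_lagrange_witness_last:
  "block_at lagrange_witness (level_start (Suc m) - int (5 * m + 5)) m"
proof (rule block_at_lagrange_witness)
  show "level_start m \<le> level_start (Suc m) - int (5 * m + 5)"
    using level_start_gap[of m] by linarith
  show "int (5 * m + 5) dvd level_start (Suc m) - int (5 * m + 5)"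
    using dvd_level_start_Suc[of m] by simp
qed simp

lemma lagrange_witness_block_before:
  assumes "1 \<le> m" "level_start m \<le> s" "s + int (5 * m + 5) \<le> level_start (Suc m)"
    "int (5 * m + 5) dvd s"
  obtains n' where "block_at lagrange_witness (s - 5 * int n' - 5) n'" "m - 1 \<le> n'"
proof (cases "s = level_start m")
  case True
  have "block_at lagrange_witness (level_start (Suc (m - 1)) - int (5 * (m - 1) + 5)) (m - 1)"
    by (rule block_at_lagrange_witness_last)
  moreover have "level_start (Suc (m - 1)) - int (5 * (m - 1) + 5) = s - 5 * int (m - 1) - 5"
    using True assms(1) by simp
  ultimately have "block_at lagrange_witness (s - 5 * int (m - 1) - 5) (m - 1)"
    by (simp only:)
  then show ?thesis
    using that[of "m - 1"] by simp
next
  case False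
  have "int (5 * m + 5) dvd s - level_start m" "0 < s - level_start m"
    using assms(2,4) False dvd_level_start[of m] by (simp_all add: dvd_diff)
  then have "level_start m \<le> s - int (5 * m + 5)"
    using zdvd_imp_le by fastforce
  then have "block_at lagrange_witness (s - int (5 * m + 5)) m"
    using assms(3,4) by (intro block_at_lagrange_witness) auto
  then show ?thesis
    using that[of m] by (simp add: algebra_simps)
qed

lemma lagrange_witness_block_after:
  assumes "level_start m \<le> s" "s + int (5 * m + 5) \<le> level_start (Suc m)" "int (5 * m + 5) dvd s"
  obtains n'' where "block_at lagrange_witness (s + 5 * int m + 5) n''" "m \<le> n''"
proof (cases "s + int (5 * m + 5) = level_start (Suc m)")
  case True
  then have "s + 5 * int m + 5 = level_start (Suc m)"
    by simp
  then show ?thesis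
    using that[of "Suc m"] block_at_lagrange_witness_first[of "Suc m"] by simp
next
  case False
  have "int (5 * m + 5) dvd level_start (Suc m) - (s + int (5 * m + 5))"
    "0 < level_start (Suc m) - (s + int (5 * m + 5))"
    using assms(2,3) False dvd_level_start_Suc[of m] by (simp_all add: dvd_diff)
  then have "s + int (5 * m + 5) + int (5 * m + 5) \<le> level_start (Suc m)"
    using zdvd_imp_le by fastforce
  then have "block_at lagrange_witness (s + int (5 * m + 5)) m"
    using assms(1,3) by (intro block_at_lagrange_witness) auto
  then show ?thesis
    using that[of m] by (simp add: algebra_simps)
qed

lemma aligned_block:
  fixes L A B p :: int
  assumes "0 < L" "L dvd A" "L dvd B" "A \<le> p" "p < B"
  obtains s where "L dvd s" "A \<le> s" "s \<le> p" "p < s + L" "s + L \<le> B"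
proof
  let ?s = "L * (p div L)"
  show dvd: "L dvd ?s" and "?s \<le> p" "p < ?s + L"
    using assms(1) pos_mod_bound[of L p] by (auto simp: algebra_simps minus_mod_eq_mult_div[symmetric])
  show "A \<le> ?s"
  proof (rule ccontr)
    assume "\<not> A \<le> ?s"
    then have "L \<le> A - ?s"
      using zdvd_imp_le[of L "A - ?s"] assms(2) dvd by (simp add: dvd_diff)
    with assms(4) \<open>p < ?s + L\<close> show False
      by linarith
  qed
  have "L \<le> B - ?s"
    using zdvd_imp_le[of L "B - ?s"] assms(3,5) \<open>?s \<le> p\<close> dvd by (simp add: dvd_diff)
  then show "?s + L \<le> B"
    by linarith
qed

lemma lambda0_lagrange_witness_le:
  assumes "1 \<le> K" "2 * K \<le> level p"
  shows "lambda0 (shift p lagrange_witness) \<le> 9/2 + 4 / 2 ^ K"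
proof -
  let ?m = "level p"
  let ?L = "int (5 * ?m + 5)" and ?A = "level_start ?m" and ?B = "level_start (Suc ?m)"
  have "0 < ?L" "?L dvd ?A" "?L dvd ?B" "?A \<le> p" "p < ?B"
    using assms dvd_level_start dvd_level_start_Suc level_ge level_less by simp_all
  then obtain s where s: "?L dvd s" "?A \<le> s" "s \<le> p" "p < s + ?L" "s + ?L \<le> ?B"
    by (rule aligned_block)
  obtain n' where "block_at lagrange_witness (s - 5 * int n' - 5) n'" "?m - 1 \<le> n'"
    by (rule lagrange_witness_block_before[of ?m s]) (use s assms in auto)
  moreover obtain n'' where "block_at lagrange_witness (s + 5 * int ?m + 5) n''" "?m \<le> n''"
    by (rule lagrange_witness_block_after[of ?m s]) (use s in auto)
  moreover have "block_at lagrange_witness s ?m"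
    using s by (intro block_at_lagrange_witness) auto
  ultimately show ?thesis
    using s assms by (intro lambda0_le_in_block[OF pos_seq_lagrange_witness]) auto
qed

lemma lambda0_lagrange_witness_ge:
  assumes "K < m"
  shows "9/2 - 4 / 2 ^ K \<le> lambda0 (shift (level_start m + int m - 1) lagrange_witness)"
  using lambda0_ge_in_block[OF pos_seq_lagrange_witness block_at_lagrange_witness_first assms] .

lemma eventually_lambda0_lagrange_witness_le:
  assumes "1 \<le> K"
  shows "eventually (\<lambda>n. lambda0 (shift (int n) lagrange_witness) \<le> 9/2 + 4 / 2 ^ K) sequentially"
  unfolding eventually_sequentially
proof (intro exI allI impI)
  fix n
  assume "nat (level_start (2 * K)) \<le> n"
  then have "2 * K \<le> level (int n)"
    by (intro le_level) linarith
  then show "lambda0 (shift (int n) lagrange_witness) \<le> 9/2 + 4 / 2 ^ K"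
    by (rule lambda0_lagrange_witness_le[OF assms])
qed

lemma lambda0_lagrange_witness_at_level_dist:
  "\<bar>lambda0 (shift (level_start (2 * K + 2) + int (2 * K + 2) - 1) lagrange_witness) - 9/2\<bar>
    \<le> 4 / 2 ^ (K + 1)"
proof -
  let ?p = "level_start (2 * K + 2) + int (2 * K + 2) - 1"
  have "level ?p = 2 * K + 2"
    using level_start_gap[of "2 * K + 2"] by (intro level_eqI) simp_all
  then have "lambda0 (shift ?p lagrange_witness) \<le> 9/2 + 4 / 2 ^ (K + 1)"
    by (intro lambda0_lagrange_witness_le) simp_all
  moreover have "9/2 - 4 / 2 ^ (K + 1) \<le> lambda0 (shift ?p lagrange_witness)"
    by (rule lambda0_lagrange_witness_ge) simp
  ultimately show ?thesis
    by (simp add: abs_le_iff)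
qed

lemma limsup_lambda0_lagrange_witness:
  "limsup (\<lambda>n. ereal (lambda0 (shift (int n) lagrange_witness))) = ereal (9/2)"
proof (rule antisym)
  let ?X = "\<lambda>n. ereal (lambda0 (shift (int n) lagrange_witness))"
  show "limsup ?X \<le> ereal (9/2)"
  proof (rule ereal_le_epsilon2)
    fix e :: real
    assume "0 < e"
    then obtain K where "1 \<le> K" "4 / 2 ^ K < e"
      using ex_div_pow2_less[of e 1 4] by blast
    then have "limsup ?X \<le> ereal (9/2 + 4 / 2 ^ K)"
      using eventually_lambda0_lagrange_witness_le by (intro Limsup_bounded) simp
    also have "\<dots> \<le> ereal (9/2) + ereal e"
      using \<open>4 / 2 ^ K < e\<close> by simp
    finally show "limsup ?X \<le> ereal (9/2) + ereal e" .
  qed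
  define r where "r K = nat (level_start (2 * K + 2) + int (2 * K + 2) - 1)" for K
  have r: "int (r K) = level_start (2 * K + 2) + int (2 * K + 2) - 1" for K
    using level_start_ge[of "2 * K + 2"] unfolding r_def by simp
  have "strict_mono r"
  proof (rule strict_monoI_Suc)
    fix K
    have "int (r K) < int (r (Suc K))"
      using level_start_mono[of "2 * K + 2" "2 * Suc K + 2"] r[of K] r[of "Suc K"] by simp
    then show "r K < r (Suc K)"
      by simp
  qed
  have "(\<lambda>K. lambda0 (shift (int (r K)) lagrange_witness) - 9/2) \<longlonglongrightarrow> 0"
    using lambda0_lagrange_witness_at_level_dist
    by (intro Lim_null_comparison[OF _ div_pow2_tendsto_0[of 2]]) (simp add: r)
  then have "limsup (?X \<circ> r) = ereal (9/2)"
    by (intro lim_imp_Limsup) (auto simp: comp_def intro: tendsto_ereal LIM_zero_cancel)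
  then show "ereal (9/2) \<le> limsup ?X"
    using limsup_subseq_mono[OF \<open>strict_mono r\<close>, of ?X] by simp
qed

lemma nine_halves_in_lagrange_spectrum: "9/2 \<in> lagrange_spectrum"
  unfolding lagrange_spectrum_def
  using pos_seq_lagrange_witness limsup_lambda0_lagrange_witness by blast

theorem lemma3p9:
  shows "cf (\<lambda>_. 4) + cf (\<lambda>k. if k = 0 then 0 else if k = 1 then 3 else [1,3,1,2] ! ((k - 2) mod 4)) = 9/2
    \<and> 9/2 = cf (\<lambda>k. if k = 0 then 3 else if k = 1 then 1 else if k = 2 then 3 else 4)
               + cf (\<lambda>k. if k = 0 then 0 else [1,2,1,3] ! ((k - 1) mod 4))
    \<and> (9/2::real) = markov_m seqA
    \<and> (\<lambda>n. markov_m (periodic_seq (block n))) \<longlonglongrightarrow> 9/2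
    \<and> (9/2::real) \<in> lagrange_spectrum \<inter> \<rat>"
  using cf_sum_eq_nine_halves_1 cf_sum_eq_nine_halves_2 markov_m_seqA markov_m_periodic_block_tendsto
    nine_halves_in_lagrange_spectrum by simp

end
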